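(* Let $a,b,n$ be positive integers and $h(j)=aj^n+b$ for $j\ge0$, $h(j)=0$ for $j<0$. Then $\beta_d^d(h)>0$ for every integer $d\ge 1$.
   Context: For a function $h:\mathbb Z\to\mathbb Z_{\ge0}$ vanishing for all sufficiently negative arguments and integers $k\le d$, $\beta_k^d(h)=\sum_{j\le k}(-1)^{k-j}\binom{d-j}{k-j}h(j)$. *)

theory Defs
  imports Main
begin

text \<open>beta_k^d(h) = sum over j <= k of (-1)^(k-j) * binom(d-j, k-j) * h(j), for h : Z -> Z_{>=0}
  vanishing for sufficiently negative arguments. Terms with h j = 0 contribute nothing, so the sum is
  taken over the (finite, under the standing assumption) set of j <= k with h j nonzero. Since j <= k <= d,
  d - j and k - j are nonnegative, so nat is harmless.\<close>
definition beta :: "int \<Rightarrow> int \<Rightarrow> (int \<Rightarrow> int) \<Rightarrow> int" where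
  "beta k d h = (\<Sum>j\<in>{j. j \<le> k \<and> h j \<noteq> 0}.
      (-1) ^ nat (k - j) * int (nat (d - j) choose nat (k - j)) * h j)"

end

theory Submission
  imports Defs
begin

text \<open>On the diagonal every binomial coefficient in \<open>\<beta>\<^sub>d\<^sup>d\<close> equals 1, so \<open>\<beta>\<^sub>d\<^sup>d(h)\<close> is the
  alternating sum \<open>h(d) - h(d-1) + h(d-2) - \<dots>\<close> down to \<open>h(0)\<close>. For a positive, strictly increasing
  sequence such an alternating sum lies in \<open>(0, h(d)]\<close>: induction on \<open>d\<close>, since the sum up to \<open>d+1\<close> is
  \<open>h(d+1)\<close> minus the sum up to \<open>d\<close>.\<close>

lemma alternating_sum_atMost_Suc:
  fixes f :: "nat \<Rightarrow> 'a::ring_1"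
  shows "(\<Sum>j\<le>Suc m. (-1) ^ (Suc m - j) * f j) = f (Suc m) - (\<Sum>j\<le>m. (-1) ^ (m - j) * f j)"
proof -
  have "(\<Sum>j\<le>m. (-1) ^ (Suc m - j) * f j) = (\<Sum>j\<le>m. - ((-1) ^ (m - j) * f j))"
    by (rule sum.cong) (auto simp: Suc_diff_le)
  then show ?thesis
    by (simp add: sum_negf)
qed

lemma alternating_sum_strict_mono_bounds:
  fixes f :: "nat \<Rightarrow> 'a::linordered_idom"
  assumes "strict_mono f" and "f 0 > 0"
  shows "0 < (\<Sum>j\<le>m. (-1) ^ (m - j) * f j) \<and> (\<Sum>j\<le>m. (-1) ^ (m - j) * f j) \<le> f m"
proof (induction m)
  case 0
  then show ?case using assms(2) by simp
next
  case (Suc m)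
  have "f m < f (Suc m)"
    using assms(1) by (simp add: strict_mono_def)
  with Suc.IH show ?case
    unfolding alternating_sum_atMost_Suc by auto
qed

lemma beta_diagonal:
  fixes h :: "int \<Rightarrow> int"
  assumes vanish: "\<And>j. j < 0 \<Longrightarrow> h j = 0" and "0 \<le> d"
  shows "beta d d h = (\<Sum>j\<le>nat d. (-1) ^ (nat d - j) * h (int j))"
proof -
  have "beta d d h = (\<Sum>j\<in>{0..d}. (-1) ^ nat (d - j) * h j)"
    unfolding beta_def
    by (rule sum.mono_neutral_cong_left) (auto simp: not_less[symmetric] vanish)
  also have "\<dots> = (\<Sum>j\<le>nat d. (-1) ^ (nat d - j) * h (int j))"
    by (rule sum.reindex_bij_witness[where i = int and j = nat])
      (use \<open>0 \<le> d\<close> in \<open>auto simp: nat_diff_distrib le_nat_iff\<close>)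
  finally show ?thesis .
qed

theorem lemma3p2:
  fixes a b d :: int and n :: nat
  assumes "a > 0" and "b > 0" and "n > 0" and "d \<ge> 1"
  shows "beta d d (\<lambda>j. if j \<ge> 0 then a * j ^ n + b else 0) > 0"
proof -
  let ?f = "\<lambda>j::nat. a * int j ^ n + b"
  have "strict_mono ?f"
    using assms(1,3) by (intro strict_monoI) (simp add: power_strict_mono)
  moreover have "?f 0 > 0"
    using assms(2,3) by (simp add: zero_power)
  ultimately have "(\<Sum>j\<le>nat d. (-1) ^ (nat d - j) * ?f j) > 0"
    using alternating_sum_strict_mono_bounds by blast
  then show ?thesis
    using assms(4) by (subst beta_diagonal) auto
qed

end
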